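(* Let $h>0$ be such that the matrix $I_d+\frac{h^2}{2}\nabla^2F(q)M$ is invertible for every $q\in\mathbb{R}^d$, so that the scheme below defines, for each fixed realization of the Wiener increments, a smooth map $(P^h[n],Q^h[n])\mapsto(P^h[n+1],Q^h[n+1])$. Then this one-step map is conformally symplectic: $$dP^h[n+1]\wedge dQ^h[n+1]=e^{-vh}\,dP^h[n]\wedge dQ^h[n],$$ where $dP\wedge dQ=\sum_{i=1}^d dP_i\wedge dQ_i$.
   Context: Let $d\le m$, let $F\in C^\infty(\mathbb{R}^d,\mathbb{R})$ and $f=\nabla F:\mathbb{R}^d\to\mathbb{R}^d$, let $M\in\mathbb{R}^{d\times d}$ be symmetric positive definite, $v>0$, and $\sigma=(\sigma_1,\dots,\sigma_m)\in\mathbb{R}^{d\times m}$ with $\mathrm{rank}\,\sigma=d$. Let $W=(W_1,\dots,W_m)^\top$ be a standard $m$-dimensional Wiener process. For a step size $h>0$, $t_n=nh$ and $\Delta_{n+1}W=W(t_{n+1})-W(t_n)$, the scheme is: given $(P^h[0],Q^h[0])=(p,q)\in\mathbb{R}^{2d}$, $$P^h[n+1]=e^{-vh}P^h[n]-\tfrac{h^2}{2}\nabla^2F(Q^h[n])MP^h[n+1]-h\big(1+\tfrac{vh}{2}\big)e^{-vh}f(Q^h[n])-\big(1+\tfrac{vh}{2}\big)e^{-vh}\sigma\Delta_{n+1}W,$$ $$Q^h[n+1]=Q^h[n]+h\big(1-\tfrac{vh}{2}\big)e^{vh}MP^h[n+1]+\tfrac{h^2}{2}Mf(Q^h[n])+\tfrac{h}{2}M\sigma\Delta_{n+1}W.$$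 (The first equation is linear in $P^h[n+1]$ and is solved for it.) *)

theory Defs
  imports "HOL-Analysis.Analysis"
begin

text \<open>C^infinity for scalar functions on real^'d: there is a family of continuous
functions containing F that is closed under taking all partial derivatives
(so all iterated partial derivatives exist everywhere and are continuous).\<close>
definition smooth_fun :: "(real^'d \<Rightarrow> real) \<Rightarrow> bool" where
  "smooth_fun F \<longleftrightarrow> (\<exists>S. F \<in> S \<and>
     (\<forall>g\<in>S. continuous_on UNIV g \<and>
        (\<forall>i. \<exists>g'\<in>S. \<forall>x. ((\<lambda>t. g (x + t *\<^sub>R axis i 1)) has_real_derivative g' x) (at 0))))"

text \<open>The one-step map of the scheme for a fixed Wiener increment xi = Delta_{n+1} W.
Hess q is the Hessian of F at q, f = grad F.\<close>
definition step_P ::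
  "real \<Rightarrow> real \<Rightarrow> real^'d^'d \<Rightarrow> (real^'d \<Rightarrow> real^'d^'d) \<Rightarrow> (real^'d \<Rightarrow> real^'d)
   \<Rightarrow> real^'m^'d \<Rightarrow> real^'m \<Rightarrow> (real^'d) \<times> (real^'d) \<Rightarrow> real^'d" where
  "step_P h v M Hess f \<sigma> \<xi> pq =
     (let p = fst pq; q = snd pq in
      matrix_inv (mat 1 + (h^2/2) *\<^sub>R (Hess q ** M)) *v
        (exp (-v * h) *\<^sub>R p - (h * (1 + v * h/2) * exp (-v * h)) *\<^sub>R f q
         - ((1 + v * h/2) * exp (-v * h)) *\<^sub>R (\<sigma> *v \<xi>)))"

definition step ::
  "real \<Rightarrow> real \<Rightarrow> real^'d^'d \<Rightarrow> (real^'d \<Rightarrow> real^'d^'d) \<Rightarrow> (real^'d \<Rightarrow> real^'d)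
   \<Rightarrow> real^'m^'d \<Rightarrow> real^'m \<Rightarrow> (real^'d) \<times> (real^'d) \<Rightarrow> (real^'d) \<times> (real^'d)" where
  "step h v M Hess f \<sigma> \<xi> pq =
     (let q = snd pq; P1 = step_P h v M Hess f \<sigma> \<xi> pq in
      (P1, q + (h * (1 - v * h/2) * exp (v * h)) *\<^sub>R (M *v P1) + (h^2/2) *\<^sub>R (M *v f q)
           + (h/2) *\<^sub>R (M *v (\<sigma> *v \<xi>))))"

definition dPdQ :: "(real^'d) \<times> (real^'d) \<Rightarrow> (real^'d) \<times> (real^'d) \<Rightarrow> real" where
  "dPdQ u w = fst u \<bullet> snd w - fst w \<bullet> snd u"

end

theory Submission
  imports Defs
begin

text \<open>Write \<open>P'\<close>, \<open>Q'\<close> for the new state, \<open>k = h\<^sup>2/2\<close> and \<open>H = \<nabla>\<^sup>2F(Q)\<close>. Differentiating the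
  implicit equation \<open>P' + k H M P' = exp(-vh) P - c\<^sub>1 f(Q) - c\<^sub>2 \<sigma> \<Delta>W\<close> gives
  \<open>dP' + k (H M dP' + \<nabla>\<^sup>3F[dQ] M P') = exp(-vh) dP - c\<^sub>1 H dQ\<close>, and
  \<open>dQ' = dQ + c\<^sub>3 M dP' + k M H dQ\<close>. Pairing \<open>dP'\<close> with \<open>dQ'\<close> and antisymmetrising, every term except
  \<open>exp(-vh) dP \<and> dQ\<close> is a symmetric bilinear form (by symmetry of \<open>M\<close>, of the Hessian and of the
  third derivative of \<open>F\<close>) and cancels, whatever the coefficients \<open>c\<^sub>1, c\<^sub>2, c\<^sub>3\<close> are. The analytic
  input is that a \<open>C\<^sup>\<infinity>\<close> function has a differentiable, symmetric Hessian (symmetry from second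
  differences, differentiability from continuity of the partial derivatives) and that the
  implicitly defined momentum is differentiable (Cramer's rule).\<close>

section \<open>Symmetry of second derivatives\<close>

lemma second_difference_mvt:
  fixes g :: "'a::real_inner \<Rightarrow> real"
  assumes g: "\<And>y. (g has_derivative (\<lambda>u. G y \<bullet> u)) (at y)" and t: "t > 0"
  shows "\<exists>\<theta>. 0 < \<theta> \<and> \<theta> < t \<and>
    g (x + t *\<^sub>R a + t *\<^sub>R b) - g (x + t *\<^sub>R a) - g (x + t *\<^sub>R b) + g x
      = t * ((G (x + \<theta> *\<^sub>R a + t *\<^sub>R b) - G (x + \<theta> *\<^sub>R a)) \<bullet> a)"
proof -
  define \<phi> where "\<phi> s = g (x + s *\<^sub>R a + t *\<^sub>R b) - g (x + s *\<^sub>R a)" for s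
  define \<phi>' where "\<phi>' s = (G (x + s *\<^sub>R a + t *\<^sub>R b) - G (x + s *\<^sub>R a)) \<bullet> a" for s
  have "DERIV \<phi> s :> \<phi>' s" for s
  proof -
    have 1: "((\<lambda>s. x + s *\<^sub>R a + t *\<^sub>R b) has_derivative (\<lambda>h. h *\<^sub>R a)) (at s)"
      by (auto intro!: derivative_eq_intros)
    have 2: "((\<lambda>s. x + s *\<^sub>R a) has_derivative (\<lambda>h. h *\<^sub>R a)) (at s)"
      by (auto intro!: derivative_eq_intros)
    have "(\<phi> has_derivative (\<lambda>h. G (x + s *\<^sub>R a + t *\<^sub>R b) \<bullet> (h *\<^sub>R a) - G (x + s *\<^sub>R a) \<bullet> (h *\<^sub>R a))) (at s)"
      unfolding \<phi>_def
      by (intro has_derivative_diff has_derivative_compose[OF 1 g, unfolded o_def]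
          has_derivative_compose[OF 2 g, unfolded o_def])
    then show ?thesis unfolding has_field_derivative_def \<phi>'_def
      by (rule has_derivative_eq_rhs) (auto simp: algebra_simps inner_diff_left)
  qed
  then obtain \<theta> where "0 < \<theta>" "\<theta> < t" "\<phi> t - \<phi> 0 = (t - 0) * \<phi>' \<theta>"
    using MVT2[of 0 t \<phi> \<phi>'] t by blast
  then show ?thesis by (intro exI[of _ \<theta>]) (simp add: \<phi>_def \<phi>'_def algebra_simps)
qed

lemma has_derivative_remainder_on_segments:
  fixes G :: "'a::real_normed_vector \<Rightarrow> 'b::real_normed_vector"
  assumes G: "(G has_derivative D) (at x)" and e: "e > 0"
  shows "\<exists>\<delta>>0. \<forall>t \<theta>. 0 \<le> \<theta> \<and> \<theta> \<le> t \<and> t < \<delta> \<longrightarrow>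
     norm (G (x + \<theta> *\<^sub>R a + t *\<^sub>R b) - G x - D (\<theta> *\<^sub>R a + t *\<^sub>R b)) \<le> e * (t * (norm a + norm b))"
proof -
  obtain d where d: "d > 0" "\<And>y. norm (y - x) < d \<Longrightarrow> norm (G y - G x - D (y - x)) \<le> e * norm (y - x)"
    using G e unfolding has_derivative_at_alt by blast
  define \<delta> where "\<delta> = d / (norm a + norm b + 1)"
  show ?thesis
  proof (intro exI[of _ \<delta>] conjI allI impI)
    show "\<delta> > 0" unfolding \<delta>_def using d by (simp add: add_nonneg_pos)
    fix t \<theta> :: real assume t: "0 \<le> \<theta> \<and> \<theta> \<le> t \<and> t < \<delta>"
    have "norm (\<theta> *\<^sub>R a + t *\<^sub>R b) \<le> norm (\<theta> *\<^sub>R a) + norm (t *\<^sub>R b)" by (rule norm_triangle_ineq)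
    also have "\<dots> \<le> t * (norm a + norm b)"
      using t by (simp add: distrib_left mult_right_mono)
    finally have near: "norm (\<theta> *\<^sub>R a + t *\<^sub>R b) \<le> t * (norm a + norm b)" .
    have "t * (norm a + norm b) \<le> t * (norm a + norm b + 1)" using t by (intro mult_left_mono) auto
    also have "\<dots> < \<delta> * (norm a + norm b + 1)"
      using t by (intro mult_strict_right_mono) (auto intro: add_nonneg_pos)
    also have "\<dots> = d"
      unfolding \<delta>_def by (smt (verit) norm_ge_zero nonzero_eq_divide_eq)
    finally have "norm (\<theta> *\<^sub>R a + t *\<^sub>R b) < d" using near by linarith
    then have "norm (G (x + \<theta> *\<^sub>R a + t *\<^sub>R b) - G x - D (\<theta> *\<^sub>R a + t *\<^sub>R b))
        \<le> e * norm (\<theta> *\<^sub>R a + t *\<^sub>R b)"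
      using d(2)[of "x + \<theta> *\<^sub>R a + t *\<^sub>R b"] by (simp add: add.assoc)
    also have "\<dots> \<le> e * (t * (norm a + norm b))" using near e by (simp add: mult_left_mono)
    finally show "norm (G (x + \<theta> *\<^sub>R a + t *\<^sub>R b) - G x - D (\<theta> *\<^sub>R a + t *\<^sub>R b))
        \<le> e * (t * (norm a + norm b))" .
  qed
qed

lemma second_difference_estimate:
  fixes g :: "'a::real_inner \<Rightarrow> real"
  assumes g: "\<And>y. (g has_derivative (\<lambda>u. G y \<bullet> u)) (at y)"
    and G: "(G has_derivative D) (at x)" and e: "e > 0"
  shows "\<exists>\<delta>>0. \<forall>t. 0 < t \<and> t < \<delta> \<longrightarrow>
     \<bar>g (x + t *\<^sub>R a + t *\<^sub>R b) - g (x + t *\<^sub>R a) - g (x + t *\<^sub>R b) + g x - t^2 * (D b \<bullet> a)\<bar>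
       \<le> e * t^2 * ((2 * norm a + norm b) * norm a)"
proof -
  interpret D: bounded_linear D using G by (rule has_derivative_bounded_linear)
  define R where "R y = G y - G x - D (y - x)" for y
  obtain \<delta>1 where \<delta>1: "\<delta>1 > 0" "\<And>t \<theta>. 0 \<le> \<theta> \<and> \<theta> \<le> t \<and> t < \<delta>1 \<Longrightarrow>
      norm (R (x + \<theta> *\<^sub>R a + t *\<^sub>R b)) \<le> e * (t * (norm a + norm b))"
    using has_derivative_remainder_on_segments[OF G e, of a b] by (auto simp: R_def add.assoc)
  obtain \<delta>2 where \<delta>2: "\<delta>2 > 0" "\<And>t \<theta>. 0 \<le> \<theta> \<and> \<theta> \<le> t \<and> t < \<delta>2 \<Longrightarrow>
      norm (R (x + \<theta> *\<^sub>R a)) \<le> e * (t * norm a)"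
    using has_derivative_remainder_on_segments[OF G e, of a 0] by (auto simp: R_def)
  show ?thesis
  proof (intro exI[of _ "min \<delta>1 \<delta>2"] conjI allI impI)
    show "min \<delta>1 \<delta>2 > 0" using \<delta>1 \<delta>2 by simp
    fix t :: real assume t: "0 < t \<and> t < min \<delta>1 \<delta>2"
    obtain \<theta> where \<theta>: "0 < \<theta>" "\<theta> < t"
      and mvt: "g (x + t *\<^sub>R a + t *\<^sub>R b) - g (x + t *\<^sub>R a) - g (x + t *\<^sub>R b) + g x
                = t * ((G (x + \<theta> *\<^sub>R a + t *\<^sub>R b) - G (x + \<theta> *\<^sub>R a)) \<bullet> a)"
      using second_difference_mvt[OF g] t by blast
    define y1 where "y1 = x + \<theta> *\<^sub>R a + t *\<^sub>R b"
    define y2 where "y2 = x + \<theta> *\<^sub>R a"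
    have r1: "norm (R y1) \<le> e * (t * (norm a + norm b))"
      unfolding y1_def using \<delta>1(2)[of \<theta> t] \<theta> t by simp
    have r2: "norm (R y2) \<le> e * (t * norm a)"
      unfolding y2_def using \<delta>2(2)[of \<theta> t] \<theta> t by simp
    have "G y1 - G y2 = t *\<^sub>R D b + (R y1 - R y2)"
      by (simp add: R_def y1_def y2_def D.diff D.add D.scaleR algebra_simps)
    then have G_diff: "(G y1 - G y2) \<bullet> a = t * (D b \<bullet> a) + (R y1 - R y2) \<bullet> a"
      by (simp add: inner_add_left)
    have eq: "g (x + t *\<^sub>R a + t *\<^sub>R b) - g (x + t *\<^sub>R a) - g (x + t *\<^sub>R b) + g x - t^2 * (D b \<bullet> a)
        = t * ((R y1 - R y2) \<bullet> a)"
      unfolding mvt unfolding y1_def[symmetric] unfolding y2_def[symmetric] G_diff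
      by (simp add: power2_eq_square algebra_simps)
    have "\<bar>(R y1 - R y2) \<bullet> a\<bar> \<le> norm (R y1 - R y2) * norm a"
      by (rule Cauchy_Schwarz_ineq2)
    also have "\<dots> \<le> (e * (t * (norm a + norm b)) + e * (t * norm a)) * norm a"
      by (intro mult_right_mono order.trans[OF norm_triangle_ineq4] add_mono r1 r2) simp_all
    also have "\<dots> = e * t * ((2 * norm a + norm b) * norm a)" by (simp add: algebra_simps)
    finally have "t * \<bar>(R y1 - R y2) \<bullet> a\<bar> \<le> t * (e * t * ((2 * norm a + norm b) * norm a))"
      using t by simp
    then show "\<bar>g (x + t *\<^sub>R a + t *\<^sub>R b) - g (x + t *\<^sub>R a) - g (x + t *\<^sub>R b) + g x - t^2 * (D b \<bullet> a)\<bar>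
       \<le> e * t^2 * ((2 * norm a + norm b) * norm a)"
      unfolding eq abs_mult using t by (simp add: power2_eq_square mult.assoc mult.left_commute)
  qed
qed

lemma gradient_derivative_symmetric:
  fixes g :: "'a::real_inner \<Rightarrow> real"
  assumes g: "\<And>y. (g has_derivative (\<lambda>u. G y \<bullet> u)) (at y)"
    and G: "(G has_derivative D) (at x)"
  shows "D a \<bullet> b = D b \<bullet> a"
proof -
  define C where "C = (2 * norm a + norm b) * norm a + (2 * norm b + norm a) * norm b + 1"
  have C: "C > 0" unfolding C_def by (intro add_nonneg_pos) auto
  have bound: "\<bar>D b \<bullet> a - D a \<bullet> b\<bar> \<le> e * C" if e: "e > 0" for e
  proof -
    obtain d1 where d1: "d1 > 0" "\<And>t. 0 < t \<and> t < d1 \<Longrightarrow>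
       \<bar>g (x + t *\<^sub>R a + t *\<^sub>R b) - g (x + t *\<^sub>R a) - g (x + t *\<^sub>R b) + g x - t^2 * (D b \<bullet> a)\<bar>
         \<le> e * t^2 * ((2 * norm a + norm b) * norm a)"
      using second_difference_estimate[OF g G e, of a b] by blast
    obtain d2 where d2: "d2 > 0" "\<And>t. 0 < t \<and> t < d2 \<Longrightarrow>
       \<bar>g (x + t *\<^sub>R b + t *\<^sub>R a) - g (x + t *\<^sub>R b) - g (x + t *\<^sub>R a) + g x - t^2 * (D a \<bullet> b)\<bar>
         \<le> e * t^2 * ((2 * norm b + norm a) * norm b)"
      using second_difference_estimate[OF g G e, of b a] by blast
    define t where "t = min d1 d2 / 2"
    have t: "0 < t" "t < d1" "t < d2" using d1 d2 by (auto simp: t_def)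
    have swap: "x + t *\<^sub>R b + t *\<^sub>R a = x + t *\<^sub>R a + t *\<^sub>R b" by (simp add: algebra_simps)
    have "\<bar>t^2 * (D b \<bullet> a) - t^2 * (D a \<bullet> b)\<bar>
        \<le> e * t^2 * ((2 * norm a + norm b) * norm a) + e * t^2 * ((2 * norm b + norm a) * norm b)"
      using d1(2)[of t] d2(2)[of t] t unfolding swap by linarith
    also have "\<dots> \<le> t^2 * (e * C)" using e t unfolding C_def by (simp add: algebra_simps)
    finally have "t^2 * \<bar>D b \<bullet> a - D a \<bullet> b\<bar> \<le> t^2 * (e * C)"
      by (simp add: abs_mult flip: right_diff_distrib)
    then show ?thesis using t by simp
  qed
  show ?thesis
  proof (rule ccontr)
    assume "D a \<bullet> b \<noteq> D b \<bullet> a"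
    then have pos: "\<bar>D b \<bullet> a - D a \<bullet> b\<bar> > 0" by simp
    from bound[of "\<bar>D b \<bullet> a - D a \<bullet> b\<bar> / (2 * C)"] pos C show False
      by (simp add: field_simps)
  qed
qed

lemma transpose_eq_self_iff: "transpose X = X \<longleftrightarrow> (\<forall>i j. X $ i $ j = X $ j $ i)"
  by (auto simp: transpose_def vec_eq_iff)

lemma symmetric_matrix_inner:
  fixes X :: "real^'n^'n"
  assumes "transpose X = X"
  shows "(X *v a) \<bullet> b = a \<bullet> (X *v b)"
  by (metis assms dot_lmul_matrix transpose_matrix_vector)

lemma has_derivative_symmetric_matrix:
  fixes X :: "'a::real_normed_vector \<Rightarrow> real^'n^'n"
  assumes sym: "\<And>x. transpose (X x) = X x" and D: "(X has_derivative D) (at q)"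
  shows "transpose (D a) = D a"
proof -
  have entry: "((\<lambda>x. X x $ i $ j) has_derivative (\<lambda>a. D a $ i $ j)) (at q)" for i j
    by (intro bounded_linear.has_derivative[OF bounded_linear_vec_nth]) (rule D)
  have "(\<lambda>x. X x $ i $ j) = (\<lambda>x. X x $ j $ i)" for i j
    using sym by (auto simp: transpose_eq_self_iff)
  then have "(\<lambda>a. D a $ i $ j) = (\<lambda>a. D a $ j $ i)" for i j
    using has_derivative_unique[OF entry[of i j]] entry[of j i] by metis
  then show ?thesis by (auto simp: transpose_eq_self_iff dest: fun_cong)
qed

lemma hessian_symmetric:
  fixes f :: "real^'d \<Rightarrow> real^'d"
  assumes f_grad: "\<And>x. (F has_derivative (\<lambda>u. f x \<bullet> u)) (at x)"
    and Hess: "\<And>x. (f has_derivative (\<lambda>u. Hess x *v u)) (at x)"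
  shows "transpose (Hess q) = Hess q"
proof -
  have "(Hess q *v a) \<bullet> b = (Hess q *v b) \<bullet> a" for a b
    by (rule gradient_derivative_symmetric[OF f_grad Hess])
  from this[of "axis j 1" "axis i 1" for i j] show ?thesis
    by (simp add: transpose_eq_self_iff matrix_vector_mult_basis column_def flip: cart_eq_inner_axis)
qed

lemma hessian_derivative_symmetric:
  fixes f :: "real^'d \<Rightarrow> real^'d"
  assumes f_grad: "\<And>x. (F has_derivative (\<lambda>u. f x \<bullet> u)) (at x)"
    and Hess: "\<And>x. (f has_derivative (\<lambda>u. Hess x *v u)) (at x)"
    and DH: "(Hess has_derivative DH) (at q)"
  shows "(DH a *v y) \<bullet> b = (DH b *v y) \<bullet> a"
proof -
  have DH_sym: "transpose (DH c) = DH c" for c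
    by (rule has_derivative_symmetric_matrix[OF hessian_symmetric[OF f_grad Hess] DH])
  have "DH a $ j \<bullet> b = DH b $ j \<bullet> a" for j
  proof (rule gradient_derivative_symmetric)
    show "((\<lambda>x. f x $ j) has_derivative (\<lambda>u. Hess y $ j \<bullet> u)) (at y)" for y
      using bounded_linear.has_derivative[OF bounded_linear_vec_nth Hess[of y], of j]
      by (simp add: matrix_vector_mul_component)
    show "((\<lambda>x. Hess x $ j) has_derivative (\<lambda>a. DH a $ j)) (at q)"
      by (rule bounded_linear.has_derivative[OF bounded_linear_vec_nth DH])
  qed
  then have swap: "DH a *v b = DH b *v a" by (simp add: vec_eq_iff matrix_vector_mul_component)
  have "(DH a *v y) \<bullet> b = y \<bullet> (DH b *v a)"
    by (simp add: symmetric_matrix_inner[OF DH_sym] swap)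
  also have "\<dots> = (DH b *v y) \<bullet> a"
    by (simp add: symmetric_matrix_inner[OF DH_sym])
  finally show ?thesis .
qed

section \<open>Continuous partial derivatives\<close>

lemma real_MVT_origin:
  fixes \<psi> :: "real \<Rightarrow> real"
  assumes "\<And>\<tau>. DERIV \<psi> \<tau> :> \<psi>' \<tau>"
  shows "\<exists>\<theta>. \<bar>\<theta>\<bar> \<le> \<bar>s\<bar> \<and> \<psi> s - \<psi> 0 = s * \<psi>' \<theta>"
proof (cases s "0::real" rule: linorder_cases)
  case less
  then obtain \<theta> where "s < \<theta>" "\<theta> < 0" "\<psi> 0 - \<psi> s = (0 - s) * \<psi>' \<theta>"
    using MVT2[of s 0 \<psi> \<psi>'] assms by blast
  then show ?thesis by (intro exI[of _ \<theta>]) (auto simp: algebra_simps)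
next
  case greater
  then obtain \<theta> where "0 < \<theta>" "\<theta> < s" "\<psi> s - \<psi> 0 = (s - 0) * \<psi>' \<theta>"
    using MVT2[of 0 s \<psi> \<psi>'] assms by blast
  then show ?thesis by (intro exI[of _ \<theta>]) auto
qed auto

lemma partial_increment_MVT:
  fixes g :: "real^'n \<Rightarrow> real"
  assumes d: "\<And>y. ((\<lambda>t. g (y + t *\<^sub>R axis i 1)) has_real_derivative dg y) (at 0)"
  shows "\<exists>\<theta>. \<bar>\<theta>\<bar> \<le> \<bar>s\<bar> \<and> g (y + s *\<^sub>R axis i 1) - g y = s * dg (y + \<theta> *\<^sub>R axis i 1)"
proof -
  define \<psi> where "\<psi> \<tau> = g (y + \<tau> *\<^sub>R axis i 1)" for \<tau>
  have "DERIV \<psi> \<tau> :> dg (y + \<tau> *\<^sub>R axis i 1)" for \<tau>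
  proof -
    have "((\<lambda>t. \<psi> (t + \<tau>)) has_real_derivative dg (y + \<tau> *\<^sub>R axis i 1)) (at 0)"
      using d[of "y + \<tau> *\<^sub>R axis i 1"] by (simp add: \<psi>_def algebra_simps scaleR_add_left)
    then show ?thesis using DERIV_shift[of \<psi> _ 0 \<tau>] by simp
  qed
  from real_MVT_origin[OF this, of s] show ?thesis by (simp add: \<psi>_def)
qed

text \<open>Moving from \<open>x\<close> to \<open>x + u\<close> one coordinate direction at a time, every intermediate point
  stays within distance \<open>CARD('n) * norm u\<close> of \<open>x\<close>.\<close>

lemma coordinate_increment_estimate:
  fixes g :: "real^'n \<Rightarrow> real"
  assumes d: "\<And>i y. ((\<lambda>t. g (y + t *\<^sub>R axis i 1)) has_real_derivative dg i y) (at 0)"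
    and close: "\<And>i y. norm (y - x) \<le> real CARD('n) * norm u \<Longrightarrow> \<bar>dg i y - dg i x\<bar> \<le> e"
  shows "\<bar>g (x + (\<Sum>i\<in>I. u $ i *\<^sub>R axis i 1)) - g x - (\<Sum>i\<in>I. u $ i * dg i x)\<bar>
           \<le> real (card I) * norm u * e"
  using finite[of I]
proof (induction I rule: finite_induct)
  case (insert i I)
  define p where "p = x + (\<Sum>j\<in>I. u $ j *\<^sub>R axis j 1)"
  obtain \<theta> where \<theta>: "\<bar>\<theta>\<bar> \<le> \<bar>u $ i\<bar>"
    and inc: "g (p + u $ i *\<^sub>R axis i 1) - g p = u $ i * dg i (p + \<theta> *\<^sub>R axis i 1)"
    using partial_increment_MVT[OF d] by blast
  have "norm (p - x) \<le> (\<Sum>j\<in>I. norm (u $ j *\<^sub>R axis j (1::real)))"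
    unfolding p_def by (simp only: add_diff_cancel_left') (rule norm_sum)
  also have "\<dots> \<le> (\<Sum>j\<in>I. norm u)"
    by (intro sum_mono) (simp add: component_le_norm_cart)
  finally have "norm (p + \<theta> *\<^sub>R axis i 1 - x) \<le> real (card I) * norm u + norm u"
    using norm_triangle_ineq[of "p - x" "\<theta> *\<^sub>R axis i 1"] \<theta> component_le_norm_cart[of u i]
    by (simp add: algebra_simps)
  also have "\<dots> = real (card (insert i I)) * norm u" using insert by (simp add: algebra_simps)
  also have "\<dots> \<le> real CARD('n) * norm u" by (intro mult_right_mono) (simp_all add: card_mono)
  finally have "\<bar>dg i (p + \<theta> *\<^sub>R axis i 1) - dg i x\<bar> \<le> e" by (rule close)
  then have "\<bar>u $ i * (dg i (p + \<theta> *\<^sub>R axis i 1) - dg i x)\<bar> \<le> norm u * e"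
    unfolding abs_mult using component_le_norm_cart[of u i] by (intro mult_mono) auto
  then show ?case
    using insert.IH insert.hyps inc
    by (simp add: p_def algebra_simps abs_le_iff)
qed simp

lemma has_derivative_of_continuous_partials:
  fixes g :: "real^'n \<Rightarrow> real"
  assumes d: "\<And>i y. ((\<lambda>t. g (y + t *\<^sub>R axis i 1)) has_real_derivative dg i y) (at 0)"
    and c: "\<And>i. continuous_on UNIV (dg i)"
  shows "(g has_derivative (\<lambda>u. \<Sum>i\<in>UNIV. u $ i * dg i x)) (at x)"
  unfolding has_derivative_at_alt
proof (intro conjI allI impI)
  show "bounded_linear (\<lambda>u. \<Sum>i\<in>UNIV. u $ i * dg i x)"
    by (intro bounded_linear_sum bounded_linear_mult_left[THEN bounded_linear_compose]
        bounded_linear_vec_nth)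
  fix e :: real assume e: "e > 0"
  define n where "n = real CARD('n)"
  have n: "n > 0" by (simp add: n_def)
  have "\<forall>\<^sub>F y in nhds x. \<forall>i. dist (dg i y) (dg i x) < e / n"
    using c e n by (intro eventually_all_finite)
      (metis continuous_on_def UNIV_I at_within_open open_UNIV tendsto_iff
        tendsto_at_iff_tendsto_nhds divide_pos_pos)
  then obtain \<delta> where \<delta>: "\<delta> > 0" "\<And>y i. dist y x < \<delta> \<Longrightarrow> \<bar>dg i y - dg i x\<bar> < e / n"
    unfolding eventually_nhds_metric by (auto simp: dist_real_def)
  show "\<exists>d>0. \<forall>y. norm (y - x) < d \<longrightarrow>
        norm (g y - g x - (\<Sum>i\<in>UNIV. (y - x) $ i * dg i x)) \<le> e * norm (y - x)"
  proof (intro exI[of _ "\<delta> / n"] conjI allI impI)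
    show "\<delta> / n > 0" using \<delta> n by simp
    fix y assume y: "norm (y - x) < \<delta> / n"
    have close: "\<bar>dg i w - dg i x\<bar> \<le> e / n" if "norm (w - x) \<le> n * norm (y - x)" for i w
      using \<delta>(2)[of w i] that y n by (simp add: dist_norm field_simps)
    have "x + (\<Sum>i\<in>UNIV. (y - x) $ i *\<^sub>R axis i 1) = y"
      using basis_expansion[of "y - x"] by (simp add: scalar_mult_eq_scaleR)
    then show "norm (g y - g x - (\<Sum>i\<in>UNIV. (y - x) $ i * dg i x)) \<le> e * norm (y - x)"
      using coordinate_increment_estimate[where I = UNIV and u = "y - x", OF d close[unfolded n_def]] n
      by (simp add: n_def mult.commute)
  qed
qed

lemma has_real_derivative_along_line:
  assumes "(g has_derivative L) (at x)"
  shows "((\<lambda>t. g (x + t *\<^sub>R v)) has_real_derivative L v) (at 0)"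
proof -
  interpret L: bounded_linear L using assms by (rule has_derivative_bounded_linear)
  have "((\<lambda>t. x + t *\<^sub>R v) has_derivative (\<lambda>t. t *\<^sub>R v)) (at 0)"
    by (auto intro!: derivative_eq_intros)
  from has_derivative_compose[OF this, of g L] have
    "((\<lambda>t. g (x + t *\<^sub>R v)) has_derivative (\<lambda>t. L (t *\<^sub>R v))) (at 0)"
    using assms by simp
  then show ?thesis unfolding has_field_derivative_def
    by (rule has_derivative_eq_rhs) (auto simp: L.scaleR)
qed

section \<open>Differentiability of vector- and matrix-valued functions\<close>

lemma has_derivative_vec_lambda:
  fixes f :: "'a::real_normed_vector \<Rightarrow> 'b::euclidean_space ^'n"
  assumes "\<And>i. ((\<lambda>x. f x $ i) has_derivative D i) (at a within S)"
  shows "(f has_derivative (\<lambda>h. \<chi> i. D i h)) (at a within S)"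
proof (rule has_derivative_componentwise_within[THEN iffD2], rule ballI)
  fix b :: "'b^'n" assume "b \<in> Basis"
  then obtain i u where b: "b = axis i u" "u \<in> Basis" by (auto simp: Basis_vec_def)
  show "((\<lambda>x. f x \<bullet> b) has_derivative (\<lambda>h. (\<chi> i. D i h) \<bullet> b)) (at a within S)"
    unfolding b inner_axis
    by (rule has_derivative_eq_rhs[OF has_derivative_inner_left[OF assms[of i], of u]]) simp
qed

lemma differentiable_vec_lambda:
  fixes f :: "'a::real_normed_vector \<Rightarrow> 'b::euclidean_space ^'n"
  assumes "\<And>i. (\<lambda>x. f x $ i) differentiable (at a within S)"
  shows "f differentiable (at a within S)"
proof -
  from assms obtain D where "\<And>i. ((\<lambda>x. f x $ i) has_derivative D i) (at a within S)"
    unfolding differentiable_def by metis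
  then show ?thesis unfolding differentiable_def by (blast intro: has_derivative_vec_lambda)
qed

lemma differentiable_vec_nth:
  assumes "f differentiable (at a within S)"
  shows "(\<lambda>x. f x $ i) differentiable (at a within S)"
  using assms bounded_linear.has_derivative[OF bounded_linear_vec_nth]
  unfolding differentiable_def by blast

lemma differentiable_prod:
  fixes g :: "'i \<Rightarrow> 'a::real_normed_vector \<Rightarrow> real"
  assumes "finite I" "\<And>i. i \<in> I \<Longrightarrow> g i differentiable (at a)"
  shows "(\<lambda>x. \<Prod>i\<in>I. g i x) differentiable (at a)"
  using assms by (induction I rule: finite_induct) (simp_all add: differentiable_mult)

lemma differentiable_det:
  fixes A :: "'a::real_normed_vector \<Rightarrow> real^'n^'n"
  assumes "A differentiable (at z)"
  shows "(\<lambda>x. det (A x)) differentiable (at z)"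
  unfolding det_def
  by (intro differentiable_sum differentiable_mult differentiable_const differentiable_prod
      ballI differentiable_vec_nth assms) (simp_all add: finite_permutations)

lemma matrix_inv_right:
  fixes A :: "real^'n^'n"
  assumes "invertible A"
  shows "A ** matrix_inv A = mat 1"
  using assms unfolding invertible_def matrix_inv_def by (rule someI_ex[THEN conjunct1])

lemma differentiable_matrix_inv_mult:
  fixes A :: "'a::real_normed_vector \<Rightarrow> real^'n^'n" and b :: "'a \<Rightarrow> real^'n"
  assumes inv: "\<And>x. invertible (A x)"
    and A: "A differentiable (at z)" and b: "b differentiable (at z)"
  shows "(\<lambda>x. matrix_inv (A x) *v b x) differentiable (at z)"
proof -
  have "matrix_inv (A x) *v b x
          = (\<chi> j. det (\<chi> i l. if l = j then b x $ i else A x $ i $ l) / det (A x))" for x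
  proof -
    have "A x *v (matrix_inv (A x) *v b x) = b x"
      using matrix_inv_right[OF inv] by (simp add: matrix_vector_mul_assoc)
    then show ?thesis by (simp add: cramer[OF invertible_det_nz[THEN iffD1, OF inv]])
  qed
  moreover have "(\<lambda>x. det (\<chi> i l. if l = j then b x $ i else A x $ i $ l) / det (A x))
                   differentiable (at z)" for j
  proof -
    have A_entry: "(\<lambda>x. A x $ i $ l) differentiable (at z)" for i l
      by (intro differentiable_vec_nth A)
    have "(\<lambda>x. if l = j then b x $ i else A x $ i $ l) differentiable (at z)" for i l
      by (cases "l = j") (simp_all add: A_entry differentiable_vec_nth b)
    then show ?thesis using invertible_det_nz[THEN iffD1, OF inv]
      by (intro differentiable_divide differentiable_det differentiable_vec_lambda) (simp_all add: A_entry)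
  qed
  ultimately show ?thesis by (simp add: differentiable_vec_lambda)
qed

section \<open>Differentiability of the Hessian of a smooth function\<close>

lemma partial_derivative_mem:
  fixes g :: "real^'n \<Rightarrow> real"
  assumes "g \<in> S"
    and closed: "\<And>g i. g \<in> S \<Longrightarrow> \<exists>g'\<in>S. \<forall>x. ((\<lambda>t. g (x + t *\<^sub>R axis i 1)) has_real_derivative g' x) (at 0)"
    and L: "\<And>x. (g has_derivative L x) (at x)"
  shows "(\<lambda>x. L x (axis i 1)) \<in> S"
proof -
  obtain g' where "g' \<in> S" and g': "\<And>x. ((\<lambda>t. g (x + t *\<^sub>R axis i 1)) has_real_derivative g' x) (at 0)"
    using closed[OF \<open>g \<in> S\<close>] by blast
  moreover have "g' = (\<lambda>x. L x (axis i 1))"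
    using DERIV_unique[OF g' has_real_derivative_along_line[OF L]] by auto
  ultimately show ?thesis by simp
qed

lemma smooth_fun_hessian_differentiable:
  fixes F :: "real^'d \<Rightarrow> real" and f :: "real^'d \<Rightarrow> real^'d"
  assumes F: "smooth_fun F"
    and f_grad: "\<And>x. (F has_derivative (\<lambda>u. f x \<bullet> u)) (at x)"
    and Hess: "\<And>x. (f has_derivative (\<lambda>u. Hess x *v u)) (at x)"
  shows "Hess differentiable (at q)"
proof -
  obtain S where "F \<in> S" and cont: "\<And>g. g \<in> S \<Longrightarrow> continuous_on UNIV g"
    and closed: "\<And>g i. g \<in> S \<Longrightarrow> \<exists>g'\<in>S. \<forall>x. ((\<lambda>t. g (x + t *\<^sub>R axis i 1)) has_real_derivative g' x) (at 0)"
    using F unfolding smooth_fun_def by metis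
  have "(\<lambda>x. f x \<bullet> axis i 1) \<in> S" for i
    by (rule partial_derivative_mem[OF \<open>F \<in> S\<close> closed f_grad])
  then have f_mem: "(\<lambda>x. f x $ i) \<in> S" for i by (simp add: cart_eq_inner_axis)
  have "(\<lambda>x. (Hess x *v axis j 1) $ i) \<in> S" for i j
  proof (rule partial_derivative_mem[OF f_mem[of i] closed])
    show "((\<lambda>x. f x $ i) has_derivative (\<lambda>u. (Hess x *v u) $ i)) (at x)" for x
      by (rule bounded_linear.has_derivative[OF bounded_linear_vec_nth Hess])
  qed
  then have Hess_mem: "(\<lambda>x. Hess x $ i $ j) \<in> S" for i j
    by (simp add: matrix_vector_mult_basis column_def)
  have "g differentiable (at q)" if g: "g \<in> S" for g
  proof -
    obtain dg where "\<And>i. dg i \<in> S"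
      and "\<And>i x. ((\<lambda>t. g (x + t *\<^sub>R axis i 1)) has_real_derivative dg i x) (at 0)"
      using closed[OF g] by metis
    then show ?thesis
      using has_derivative_of_continuous_partials[of g dg q] cont
      unfolding differentiable_def by blast
  qed
  with Hess_mem show ?thesis by (intro differentiable_vec_lambda) blast
qed

section \<open>The tangent map of the scheme\<close>

lemma bounded_bilinear_matrix_vector_mult:
  "bounded_bilinear (\<lambda>(X::real^'n^'m) (y::real^'n). X *v y)"
proof -
  have "bilinear (\<lambda>(X::real^'n^'m) (y::real^'n). X *v y)"
    unfolding bilinear_def
  proof (intro conjI allI)
    show "linear ((*v) X)" for X :: "real^'n^'m" by simp
    show "linear (\<lambda>X::real^'n^'m. X *v y)" for y :: "real^'n"
      by (rule linearI) (simp_all add: matrix_vector_mult_add_rdistrib flip: scaleR_matrix_vector_assoc)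
  qed
  then show ?thesis by (simp add: bilinear_conv_bounded_bilinear)
qed

lemma step_P_solves:
  assumes "invertible (mat 1 + (h^2/2) *\<^sub>R (Hess (snd z) ** M))"
  shows "step_P h v M Hess f \<sigma> \<xi> z + (h^2/2) *\<^sub>R (Hess (snd z) *v (M *v step_P h v M Hess f \<sigma> \<xi> z))
    = exp (-v * h) *\<^sub>R fst z - (h * (1 + v * h/2) * exp (-v * h)) *\<^sub>R f (snd z)
      - ((1 + v * h/2) * exp (-v * h)) *\<^sub>R (\<sigma> *v \<xi>)"
proof -
  define A where "A = mat 1 + (h^2/2) *\<^sub>R (Hess (snd z) ** M)"
  have A_mult: "A *v y = y + (h^2/2) *\<^sub>R (Hess (snd z) *v (M *v y))" for y
    by (simp add: A_def matrix_vector_mult_add_rdistrib matrix_vector_mul_assoc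
        flip: scaleR_matrix_vector_assoc)
  have "A *v step_P h v M Hess f \<sigma> \<xi> z
      = exp (-v * h) *\<^sub>R fst z - (h * (1 + v * h/2) * exp (-v * h)) *\<^sub>R f (snd z)
        - ((1 + v * h/2) * exp (-v * h)) *\<^sub>R (\<sigma> *v \<xi>)"
    using matrix_inv_right[OF assms]
    by (simp add: step_P_def Let_def A_def matrix_vector_mul_assoc)
  then show ?thesis by (simp add: A_mult)
qed

lemma step_P_differentiable:
  assumes inv: "\<And>q. invertible (mat 1 + (h^2/2) *\<^sub>R (Hess q ** M))"
    and Hess: "\<And>q. Hess differentiable (at q)" and f: "\<And>q. f differentiable (at q)"
  shows "step_P h v M Hess f \<sigma> \<xi> differentiable (at z)"
proof -
  have snd: "snd differentiable (at z)"
    by (simp add: bounded_linear_snd bounded_linear_imp_differentiable)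
  have Hess_snd: "(\<lambda>z. Hess (snd z) $ i $ l) differentiable (at z)" for i l
    by (intro differentiable_vec_nth differentiable_compose[OF Hess snd, unfolded o_def])
  have "(\<lambda>z. Hess (snd z) ** M) differentiable (at z)"
    by (intro differentiable_vec_lambda)
      (simp add: matrix_matrix_mult_def differentiable_sum differentiable_mult Hess_snd)
  moreover have "(\<lambda>z. f (snd z)) differentiable (at z)"
    by (rule differentiable_compose[OF f snd, unfolded o_def])
  moreover have "fst differentiable (at z)"
    by (simp add: bounded_linear_fst bounded_linear_imp_differentiable)
  ultimately show ?thesis
    unfolding step_P_def[abs_def] Let_def
    by (intro differentiable_matrix_inv_mult inv differentiable_add differentiable_diff
        differentiable_scaleR differentiable_const)
qed

lemma step_P_derivative_equation:
  fixes Hess :: "real^'d \<Rightarrow> real^'d^'d"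
  assumes inv: "\<And>q. invertible (mat 1 + (h^2/2) *\<^sub>R (Hess q ** M))"
    and DP: "(step_P h v M Hess f \<sigma> \<xi> has_derivative DP) (at z)"
    and DH: "(Hess has_derivative DH) (at (snd z))"
    and Hess: "(f has_derivative (\<lambda>u. Hess (snd z) *v u)) (at (snd z))"
  shows "DP u + (h^2/2) *\<^sub>R (Hess (snd z) *v (M *v DP u) + DH (snd u) *v (M *v step_P h v M Hess f \<sigma> \<xi> z))
    = exp (-v * h) *\<^sub>R fst u - (h * (1 + v * h/2) * exp (-v * h)) *\<^sub>R (Hess (snd z) *v snd u)"
proof -
  let ?P = "step_P h v M Hess f \<sigma> \<xi>"
  have snd: "(snd has_derivative snd) (at z)" and fst: "(fst has_derivative fst) (at z)"
    by (auto intro: bounded_linear_imp_has_derivative bounded_linear_snd bounded_linear_fst)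
  have "((\<lambda>z. Hess (snd z) *v (M *v ?P z)) has_derivative
      (\<lambda>u. Hess (snd z) *v (M *v DP u) + DH (snd u) *v (M *v ?P z))) (at z)"
    using bounded_bilinear.FDERIV[OF bounded_bilinear_matrix_vector_mult
        has_derivative_compose[OF snd DH] bounded_linear.has_derivative[OF matrix_vector_mul_bounded_linear DP]]
    by simp
  then have lhs: "((\<lambda>z. ?P z + (h^2/2) *\<^sub>R (Hess (snd z) *v (M *v ?P z))) has_derivative
      (\<lambda>u. DP u + (h^2/2) *\<^sub>R (Hess (snd z) *v (M *v DP u) + DH (snd u) *v (M *v ?P z)))) (at z)"
    by (intro has_derivative_add DP has_derivative_scaleR_right)
  have rhs: "((\<lambda>z. exp (-v * h) *\<^sub>R fst z - (h * (1 + v * h/2) * exp (-v * h)) *\<^sub>R f (snd z)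
        - ((1 + v * h/2) * exp (-v * h)) *\<^sub>R (\<sigma> *v \<xi>)) has_derivative
      (\<lambda>u. exp (-v * h) *\<^sub>R fst u - (h * (1 + v * h/2) * exp (-v * h)) *\<^sub>R (Hess (snd z) *v snd u) - 0)) (at z)"
    by (intro has_derivative_diff has_derivative_scaleR_right fst has_derivative_const
        has_derivative_compose[OF snd Hess])
  have "(\<lambda>z. ?P z + (h^2/2) *\<^sub>R (Hess (snd z) *v (M *v ?P z)))
      = (\<lambda>z. exp (-v * h) *\<^sub>R fst z - (h * (1 + v * h/2) * exp (-v * h)) *\<^sub>R f (snd z)
        - ((1 + v * h/2) * exp (-v * h)) *\<^sub>R (\<sigma> *v \<xi>))"
    by (intro ext step_P_solves inv)
  from fun_cong[OF has_derivative_unique[OF lhs[unfolded this] rhs], of u]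
  show ?thesis by simp
qed

lemma step_has_derivative:
  assumes DP: "(step_P h v M Hess f \<sigma> \<xi> has_derivative DP) (at z)"
    and Hess: "(f has_derivative (\<lambda>u. Hess (snd z) *v u)) (at (snd z))"
  shows "(step h v M Hess f \<sigma> \<xi> has_derivative (\<lambda>u. (DP u,
            snd u + (h * (1 - v * h/2) * exp (v * h)) *\<^sub>R (M *v DP u)
              + (h^2/2) *\<^sub>R (M *v (Hess (snd z) *v snd u))))) (at z)"
proof -
  have snd: "(snd has_derivative snd) (at z)"
    by (intro bounded_linear_imp_has_derivative bounded_linear_snd)
  have "((\<lambda>z. snd z + (h * (1 - v * h/2) * exp (v * h)) *\<^sub>R (M *v step_P h v M Hess f \<sigma> \<xi> z)
          + (h^2/2) *\<^sub>R (M *v f (snd z)) + (h/2) *\<^sub>R (M *v (\<sigma> *v \<xi>)))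
      has_derivative (\<lambda>u. snd u + (h * (1 - v * h/2) * exp (v * h)) *\<^sub>R (M *v DP u)
          + (h^2/2) *\<^sub>R (M *v (Hess (snd z) *v snd u)) + 0)) (at z)"
    by (intro has_derivative_add snd has_derivative_scaleR_right has_derivative_const
        bounded_linear.has_derivative[OF matrix_vector_mul_bounded_linear]
        DP has_derivative_compose[OF snd Hess])
  then show ?thesis
    unfolding step_def[abs_def] Let_def by (intro has_derivative_Pair DP) simp
qed

lemma tangent_map_conformally_symplectic:
  fixes DP :: "(real^'d) \<times> (real^'d) \<Rightarrow> real^'d" and H M :: "real^'d^'d"
    and B :: "real^'d \<Rightarrow> real^'d"
  assumes implicit: "\<And>u. DP u + k *\<^sub>R (H *v (M *v DP u) + B (snd u)) = a *\<^sub>R fst u - b *\<^sub>R (H *v snd u)"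
    and H: "transpose H = H" and M: "transpose M = M" and B: "\<And>x y. B x \<bullet> y = B y \<bullet> x"
    and T: "\<And>u. T u = (DP u, snd u + c *\<^sub>R (M *v DP u) + k *\<^sub>R (M *v (H *v snd u)))"
  shows "dPdQ (T u) (T w) = a * dPdQ u w"
proof -
  have cross: "DP u \<bullet> snd (T w) = a * (fst u \<bullet> snd w) - b * ((H *v snd u) \<bullet> snd w)
      - k * (B (snd u) \<bullet> snd w) + c * (DP u \<bullet> (M *v DP w))" for u w
  proof -
    have "DP u \<bullet> (M *v (H *v snd w)) = (H *v (M *v DP u)) \<bullet> snd w"
      by (simp add: symmetric_matrix_inner[OF M, symmetric] symmetric_matrix_inner[OF H])
    then have "DP u \<bullet> snd (T w) = (DP u + k *\<^sub>R (H *v (M *v DP u))) \<bullet> snd w + c * (DP u \<bullet> (M *v DP w))"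
      by (simp add: T inner_add_left inner_add_right)
    also have "DP u + k *\<^sub>R (H *v (M *v DP u)) = a *\<^sub>R fst u - b *\<^sub>R (H *v snd u) - k *\<^sub>R B (snd u)"
      using implicit[of u] by (simp add: scaleR_add_right eq_diff_eq add.assoc)
    finally show ?thesis by (simp add: inner_diff_left)
  qed
  have H_swap: "(H *v snd w) \<bullet> snd u = (H *v snd u) \<bullet> snd w"
    by (metis symmetric_matrix_inner[OF H] inner_commute)
  have M_swap: "DP w \<bullet> (M *v DP u) = DP u \<bullet> (M *v DP w)"
    by (metis symmetric_matrix_inner[OF M] inner_commute)
  have "dPdQ (T u) (T w) = DP u \<bullet> snd (T w) - DP w \<bullet> snd (T u)"
    by (simp add: dPdQ_def T)
  also have "\<dots> = a * dPdQ u w"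
    unfolding cross H_swap M_swap B[of "snd w"] dPdQ_def by (simp add: inner_commute algebra_simps)
  finally show ?thesis .
qed

theorem theorem3p1:
  fixes F :: "real^'d \<Rightarrow> real" and f :: "real^'d \<Rightarrow> real^'d"
    and Hess :: "real^'d \<Rightarrow> real^'d^'d" and M :: "real^'d^'d"
    and \<sigma> :: "real^'m^'d" and v h :: real and \<xi> :: "real^'m"
  assumes dm: "CARD('d) \<le> CARD('m)"
    and F_smooth: "smooth_fun F"
    and f_grad: "\<And>x. (F has_derivative (\<lambda>u. f x \<bullet> u)) (at x)"
    and Hess_def: "\<And>x. (f has_derivative (\<lambda>u. Hess x *v u)) (at x)"
    and M_sym: "transpose M = M"
    and M_pd: "\<And>x. x \<noteq> 0 \<Longrightarrow> x \<bullet> (M *v x) > 0"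
    and v_pos: "v > 0"
    and rank_\<sigma>: "rank \<sigma> = CARD('d)"
    and h_pos: "h > 0"
    and inv: "\<And>q. invertible (mat 1 + (h^2/2) *\<^sub>R (Hess q ** M))"
  shows "\<forall>z. step h v M Hess f \<sigma> \<xi> differentiable (at z) \<and>
           (\<forall>u w. dPdQ (frechet_derivative (step h v M Hess f \<sigma> \<xi>) (at z) u)
                       (frechet_derivative (step h v M Hess f \<sigma> \<xi>) (at z) w)
                  = exp (-v * h) * dPdQ u w)"
proof (intro allI)
  fix z :: "(real^'d) \<times> (real^'d)"
  have Hess_diff: "Hess differentiable (at q)" for q
    by (rule smooth_fun_hessian_differentiable[OF F_smooth f_grad Hess_def])
  then obtain DH where DH: "(Hess has_derivative DH) (at (snd z))"
    unfolding differentiable_def by blast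
  have "f differentiable (at q)" for q
    using Hess_def unfolding differentiable_def by blast
  then have "step_P h v M Hess f \<sigma> \<xi> differentiable (at z)"
    by (intro step_P_differentiable inv Hess_diff)
  then obtain DP where DP: "(step_P h v M Hess f \<sigma> \<xi> has_derivative DP) (at z)"
    unfolding differentiable_def by blast
  note D = step_has_derivative[OF DP Hess_def]
  have T: "frechet_derivative (step h v M Hess f \<sigma> \<xi>) (at z) u = (DP u,
      snd u + (h * (1 - v * h/2) * exp (v * h)) *\<^sub>R (M *v DP u)
        + (h^2/2) *\<^sub>R (M *v (Hess (snd z) *v snd u)))" for u
    unfolding frechet_derivative_at[OF D, symmetric] by simp
  show "step h v M Hess f \<sigma> \<xi> differentiable (at z) \<and>
      (\<forall>u w. dPdQ (frechet_derivative (step h v M Hess f \<sigma> \<xi>) (at z) u)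
                  (frechet_derivative (step h v M Hess f \<sigma> \<xi>) (at z) w)
             = exp (-v * h) * dPdQ u w)"
    using D tangent_map_conformally_symplectic
        [where B = "\<lambda>x. DH x *v (M *v step_P h v M Hess f \<sigma> \<xi> z)",
         OF step_P_derivative_equation[OF inv DP DH Hess_def]
            hessian_symmetric[OF f_grad Hess_def] M_sym
            hessian_derivative_symmetric[OF f_grad Hess_def DH] T]
    unfolding differentiable_def by blast
qed

end
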